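(* Let $p$ be a prime, $m$ a positive integer, $q=p^m$, and let $l,s$ be positive integers with $q-1=ls$; let $r$ be a positive integer. Let $\gamma$ be a primitive element of $\mathbb{F}_q$, $\xi=\gamma^s$, $f\in\mathbb{F}_q[x]$, and $A_i=f(\xi^i)$ for $0\le i\le l-1$. If $P(x)=x^rf(x^s)$ is a permutation polynomial of $\mathbb{F}_q$, then $l \mid 2\,\mathrm{Ind}_\gamma(A_0A_1\cdots A_{l-1})$.
   Context: A permutation polynomial of $\mathbb{F}_q$ is a polynomial inducing a bijection $\mathbb{F}_q\to\mathbb{F}_q$. For nonzero $a\in\mathbb{F}_q$, $\mathrm{Ind}_\gamma(a)$ denotes the residue class $b \bmod (q-1)$ with $a=\gamma^b$; since $l\mid q-1$, divisibility of $\mathrm{Ind}_\gamma(a)$ (or of a multiple of it) by $l$ is well defined. (When $P$ is a permutation polynomial all $A_i$ are nonzero, so the index is defined.) *)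

theory Defs
  imports "HOL-Computational_Algebra.Polynomial"
begin

definition primitive_element :: "'a::{finite,field} \<Rightarrow> bool" where
  "primitive_element g \<longleftrightarrow> g \<noteq> 0 \<and> (\<forall>a. a \<noteq> 0 \<longrightarrow> (\<exists>b::nat. a = g ^ b))"

definition Ind :: "'a::{finite,field} \<Rightarrow> 'a \<Rightarrow> nat" where
  "Ind g a = (THE b. b < card (UNIV :: 'a set) - 1 \<and> g ^ b = a)"

definition permutation_poly :: "'a::{finite,field} poly \<Rightarrow> bool" where
  "permutation_poly P \<longleftrightarrow> bij (poly P)"

end

theory Submission
  imports Defs
begin

(* Let W be the product of all elements of the multiplicative group F_q^*. Inversion permutes
   F_q^*, so W^2 = 1. Since r > 0, P fixes 0 and hence permutes F_q^*, which gives
   W = prod P(x) = W^r * prod f(x^s). Writing x = gamma^j, the value x^s = xi^j depends only on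
   j mod l, so the last product is A^s with A = A_0 ... A_(l-1). With W^2 = 1 this forces
   A^(2s) = 1, i.e. q - 1 = ls divides 2s Ind(A). *)

lemma prod_lessThan_mult_mod:
  fixes g :: "nat \<Rightarrow> 'b::comm_monoid_mult"
  shows "(\<Prod>j<l * s. g (j mod l)) = (\<Prod>i<l. g i) ^ s"
proof (induction s)
  case 0
  then show ?case by simp
next
  case (Suc s)
  have "{..<l * Suc s} = {..<l * s} \<union> {l * s..<l * s + l}" by auto
  then have "(\<Prod>j<l * Suc s. g (j mod l))
      = (\<Prod>j<l * s. g (j mod l)) * (\<Prod>j\<in>{l * s..<l * s + l}. g (j mod l))"
    by (simp add: prod.union_disjoint ivl_disj_int)
  also have "(\<Prod>j\<in>{l * s..<l * s + l}. g (j mod l)) = (\<Prod>i\<in>{0..<l}. g ((i + l * s) mod l))"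
    using prod.shift_bounds_nat_ivl[of "\<lambda>j. g (j mod l)" 0 "l * s" l] by (simp add: add.commute)
  also have "\<dots> = (\<Prod>i<l. g i)"
    by (intro prod.cong) auto
  finally show ?case using Suc by (simp add: mult.commute)
qed

lemma power_mod_eq_of_power_eq_one:
  fixes x :: "'a::monoid_mult"
  assumes "x ^ n = 1"
  shows "x ^ (k mod n) = x ^ k"
proof -
  have "x ^ k = (x ^ n) ^ (k div n) * x ^ (k mod n)"
    by (metis div_mult_mod_eq power_add power_mult mult.commute)
  then show ?thesis using assms by simp
qed

lemma prod_nonzero_bij_eq:
  fixes g :: "'a::{zero, comm_monoid_mult} \<Rightarrow> 'a"
  assumes "bij g" and "g 0 = 0"
  shows "(\<Prod>x\<in>UNIV - {0}. g x) = (\<Prod>x\<in>UNIV - {0}. x)"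
proof (rule prod.reindex_bij_betw)
  show "bij_betw g (UNIV - {0}) (UNIV - {0})"
    using assms by (intro bij_betw_DiffI) auto
qed

lemma prod_nonzero_mult_eq:
  fixes a :: "'a::{finite, field}"
  assumes "a \<noteq> 0"
  shows "(\<Prod>x\<in>UNIV - {0}. a * x) = (\<Prod>x\<in>UNIV - {0}. x)"
  by (rule prod.reindex_bij_witness[of _ "\<lambda>y. y / a" "\<lambda>y. a * y"]) (use assms in auto)

lemma nonzero_power_card_minus_one:
  fixes a :: "'a::{finite, field}"
  assumes "a \<noteq> 0"
  shows "a ^ (card (UNIV :: 'a set) - 1) = 1"
proof -
  have "(\<Prod>x\<in>UNIV - {0}. x) = a ^ (card (UNIV :: 'a set) - 1) * (\<Prod>x\<in>UNIV - {0::'a}. x)"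
    using prod_nonzero_mult_eq[OF assms] by (simp add: prod.distrib card_Diff_singleton)
  then show ?thesis by simp
qed

lemma prod_nonzero_square:
  "(\<Prod>x\<in>UNIV - {0::'a::{finite, field}}. x) ^ 2 = 1"
proof -
  define W where "W = (\<Prod>x\<in>UNIV - {0::'a}. x)"
  have "W = (\<Prod>x\<in>UNIV - {0}. inverse x)"
    unfolding W_def by (rule prod.reindex_bij_witness[of _ inverse inverse]) auto
  also have "\<dots> = inverse W"
    unfolding W_def using prod_inversef[of "\<lambda>x. x" "UNIV - {0::'a}"] by simp
  finally have "W * W = W * inverse W" by simp
  moreover have "W \<noteq> 0" unfolding W_def by simp
  ultimately show ?thesis unfolding W_def[symmetric] by (simp add: power2_eq_square)
qed

lemma card_UNIV_minus_one_pos: "card (UNIV :: 'a::{finite, field} set) - 1 > 0"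
proof -
  have "card {0, 1 :: 'a} \<le> card (UNIV :: 'a set)"
    by (rule card_mono) simp_all
  then show ?thesis by simp
qed

lemma primitive_element_power_card_minus_one:
  fixes \<gamma> :: "'a::{finite, field}"
  assumes "primitive_element \<gamma>"
  shows "\<gamma> ^ (card (UNIV :: 'a set) - 1) = 1"
  using assms nonzero_power_card_minus_one[of \<gamma>] unfolding primitive_element_def by blast

lemma primitive_element_bij_betw_power:
  fixes \<gamma> :: "'a::{finite, field}"
  assumes "primitive_element \<gamma>"
  shows "bij_betw (\<lambda>b. \<gamma> ^ b) {..<card (UNIV :: 'a set) - 1} (UNIV - {0})"
proof -
  let ?n = "card (UNIV :: 'a set) - 1"
  have "?n > 0"
    using card_UNIV_minus_one_pos .
  have image: "(\<lambda>b. \<gamma> ^ b) ` {..<?n} = UNIV - {0}"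
  proof
    show "(\<lambda>b. \<gamma> ^ b) ` {..<?n} \<subseteq> UNIV - {0}"
      using assms unfolding primitive_element_def by auto
    show "UNIV - {0} \<subseteq> (\<lambda>b. \<gamma> ^ b) ` {..<?n}"
    proof
      fix a :: 'a assume "a \<in> UNIV - {0}"
      then obtain b where "a = \<gamma> ^ b"
        using assms unfolding primitive_element_def by blast
      also have "\<dots> = \<gamma> ^ (b mod ?n)"
        using power_mod_eq_of_power_eq_one[OF primitive_element_power_card_minus_one[OF assms]]
        by (rule sym)
      finally show "a \<in> (\<lambda>b. \<gamma> ^ b) ` {..<?n}"
        using \<open>?n > 0\<close> by simp
    qed
  qed
  moreover have "inj_on (\<lambda>b. \<gamma> ^ b) {..<?n}"
  proof (rule eq_card_imp_inj_on)
    show "card ((\<lambda>b. \<gamma> ^ b) ` {..<?n}) = card {..<?n}"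
      unfolding image by (simp add: card_Diff_singleton)
  qed simp
  ultimately show ?thesis by (simp add: bij_betw_def)
qed

lemma primitive_element_power_eq_one_iff:
  fixes \<gamma> :: "'a::{finite, field}"
  assumes "primitive_element \<gamma>"
  shows "\<gamma> ^ k = 1 \<longleftrightarrow> (card (UNIV :: 'a set) - 1) dvd k"
proof
  let ?n = "card (UNIV :: 'a set) - 1"
  have bij: "bij_betw (\<lambda>b. \<gamma> ^ b) {..<?n} (UNIV - {0})"
    using primitive_element_bij_betw_power[OF assms] .
  have power_n: "\<gamma> ^ ?n = 1"
    using primitive_element_power_card_minus_one[OF assms] .
  have "?n > 0"
    using card_UNIV_minus_one_pos .
  show "?n dvd k" if "\<gamma> ^ k = 1"
  proof -
    have "\<gamma> ^ (k mod ?n) = \<gamma> ^ 0"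
      using that power_mod_eq_of_power_eq_one[OF power_n] by simp
    then have "k mod ?n = 0"
      using bij \<open>?n > 0\<close> by (auto simp: bij_betw_def inj_on_def)
    then show ?thesis by (simp add: mod_eq_0_iff_dvd)
  qed
  show "\<gamma> ^ k = 1" if "?n dvd k"
    using that power_n by (auto simp: power_mult)
qed

lemma power_Ind:
  fixes \<gamma> :: "'a::{finite, field}"
  assumes "primitive_element \<gamma>" and "a \<noteq> 0"
  shows "\<gamma> ^ Ind \<gamma> a = a"
proof -
  let ?n = "card (UNIV :: 'a set) - 1"
  have bij: "bij_betw (\<lambda>b. \<gamma> ^ b) {..<?n} (UNIV - {0})"
    using primitive_element_bij_betw_power[OF assms(1)] .
  have "a \<in> (\<lambda>b. \<gamma> ^ b) ` {..<?n}"
    using bij assms(2) by (simp add: bij_betw_def)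
  then obtain b where b: "b < ?n" "\<gamma> ^ b = a"
    by blast
  have "Ind \<gamma> a = b"
    unfolding Ind_def
  proof (rule the_equality)
    show "b' = b" if "b' < ?n \<and> \<gamma> ^ b' = a" for b'
      using inj_onD[OF bij_betw_imp_inj_on[OF bij], of b' b] b that by simp
  qed (use b in simp)
  with b show ?thesis by simp
qed

lemma prod_nonzero_power_eq:
  fixes \<gamma> :: "'a::{finite, field}" and h :: "'a \<Rightarrow> 'b::comm_monoid_mult"
  assumes "primitive_element \<gamma>" and "card (UNIV :: 'a set) - 1 = l * s"
  shows "(\<Prod>x\<in>UNIV - {0}. h (x ^ s)) = (\<Prod>i<l. h ((\<gamma> ^ s) ^ i)) ^ s"
proof -
  have order_l: "(\<gamma> ^ s) ^ l = 1"
    using primitive_element_power_card_minus_one[OF assms(1)] assms(2)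
    by (simp add: power_mult[symmetric] mult.commute)
  have "bij_betw (\<lambda>b. \<gamma> ^ b) {..<l * s} (UNIV - {0})"
    using primitive_element_bij_betw_power[OF assms(1)] assms(2) by simp
  then have "(\<Prod>x\<in>UNIV - {0}. h (x ^ s)) = (\<Prod>j<l * s. h ((\<gamma> ^ j) ^ s))"
    by (rule prod.reindex_bij_betw[symmetric])
  also have "\<dots> = (\<Prod>j<l * s. h ((\<gamma> ^ s) ^ (j mod l)))"
    using power_mod_eq_of_power_eq_one[OF order_l]
    by (simp add: power_mult[symmetric] mult.commute)
  also have "\<dots> = (\<Prod>i<l. h ((\<gamma> ^ s) ^ i)) ^ s"
    by (rule prod_lessThan_mult_mod)
  finally show ?thesis .
qed

lemma square_eq_one_if_power_mult_eq:
  fixes w a :: "'a::comm_monoid_mult"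
  assumes "w ^ 2 = 1" and "w ^ r * a = w"
  shows "a ^ 2 = 1"
proof -
  have "w ^ (r + 1) = w ^ r * (w ^ r * a)"
    using assms(2) by (simp add: mult.commute)
  also have "\<dots> = (w ^ 2) ^ r * a"
    by (simp add: power_mult_distrib power2_eq_square mult.assoc)
  finally have "a = w ^ (r + 1)"
    using assms(1) by simp
  then have "a ^ 2 = (w ^ 2) ^ (r + 1)"
    by (simp only: power_mult[symmetric] mult.commute)
  then show ?thesis
    using assms(1) by simp
qed

lemma card_minus_one_dvd_mult_Ind:
  fixes \<gamma> :: "'a::{finite, field}"
  assumes "primitive_element \<gamma>" and "a ^ k = 1"
  shows "(card (UNIV :: 'a set) - 1) dvd k * Ind \<gamma> a"
proof (cases "k = 0")
  case False
  with assms(2) have "a \<noteq> 0"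
    by (auto simp: power_0_left)
  then have "\<gamma> ^ (k * Ind \<gamma> a) = a ^ k"
    using power_Ind[OF assms(1)] by (simp add: power_mult mult.commute[of k])
  then show ?thesis
    using assms(2) primitive_element_power_eq_one_iff[OF assms(1)] by simp
qed simp

theorem theorem2p1:
  fixes p m l s r :: nat and \<gamma> :: "'a::{finite,field}" and f :: "'a poly"
  assumes "prime p" and "m > 0" and "card (UNIV :: 'a set) = p ^ m"
    and "l > 0" and "s > 0" and "card (UNIV :: 'a set) - 1 = l * s" and "r > 0"
    and "primitive_element \<gamma>"
    and "permutation_poly (monom 1 r * pcompose f (monom 1 s))"
  shows "l dvd 2 * Ind \<gamma> (\<Prod>i<l. poly f ((\<gamma> ^ s) ^ i))"
proof -
  define P where "P = monom 1 r * pcompose f (monom 1 s)"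
  define A where "A = (\<Prod>i<l. poly f ((\<gamma> ^ s) ^ i))"
  define W where "W = (\<Prod>x\<in>UNIV - {0::'a}. x)"
  have poly_P: "poly P x = x ^ r * poly f (x ^ s)" for x
    unfolding P_def by (simp add: poly_monom poly_pcompose)
  have "bij (poly P)"
    using assms(9) unfolding P_def permutation_poly_def .
  moreover have "poly P 0 = 0"
    using assms(7) by (simp add: poly_P)
  ultimately have "W = (\<Prod>x\<in>UNIV - {0}. poly P x)"
    unfolding W_def by (rule prod_nonzero_bij_eq[symmetric])
  also have "\<dots> = W ^ r * A ^ s"
    using prod_nonzero_power_eq[OF assms(8,6), of "poly f"]
    by (simp add: poly_P W_def A_def prod.distrib prod_power_distrib)
  finally have "(A ^ s) ^ 2 = 1"
    using prod_nonzero_square square_eq_one_if_power_mult_eq unfolding W_def by metis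
  then have "l * s dvd (2 * s) * Ind \<gamma> A"
    using card_minus_one_dvd_mult_Ind[OF assms(8)] assms(6)
    by (metis mult.commute power_mult)
  then show ?thesis
    unfolding A_def using assms(5) by (simp add: mult_ac)
qed

end
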